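(* Let $n\ge 1$ and let $f:\{0,1\}^n\to\{0,1\}^n$. If $G_f$ is topologically transitive on $(\mathcal{X},d)$, then $G_f$ is regular, i.e. the set of periodic points of $G_f$ is dense in $(\mathcal{X},d)$. In other words, $\mathcal{T}\subset\mathcal{R}$, where $\mathcal{T}$ is the set of maps $f:\{0,1\}^n\to\{0,1\}^n$ with $G_f$ transitive and $\mathcal{R}$ the set of such maps with $G_f$ regular.
   Context: Write $\mathbb{B}=\{0,1\}$ and $\llbracket 1;n\rrbracket=\{1,\dots,n\}$. For $f=(f_1,\dots,f_n):\mathbb{B}^n\to\mathbb{B}^n$, define $F_f(i,x)=(x_1,\dots,x_{i-1},f_i(x),x_{i+1},\dots,x_n)$ for $i\in\llbracket 1;n\rrbracket$, $x\in\mathbb{B}^n$. Let $\mathcal{X}=\llbracket 1;n\rrbracket^{\mathbb{N}}\times\mathbb{B}^n$ and $G_f(s,x)=(\sigma(s),F_f(s_0,x))$ where $\sigma(s)_t=s_{t+1}$. The metric is $d((s,x),(s',x'))=\sum_{i=1}^n|x_i-x'_i|+\frac{9}{n}\sum_{t\in\mathbb{N}}\frac{|s_t-s'_t|}{10^{t+1}}$. $G_f$ is topologically transitive if for all $X,Y\in\mathcal{X}$ and all open balls $B_X,B_Y$ centered at $X,Y$, there exist $X'\in B_X$ and $t\in\mathbb{N}$ with $G_f^t(X')\in B_Y$. A point $X$ is periodic if $G_f^p(X)=X$ for some $p\ge 1$. *)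

theory Defs
  imports "HOL-Analysis.Analysis"
begin

text \<open>Points of B^n are boolean functions on nat that vanish outside {1..n};
strategies are sequences nat => nat with values in {1..n}.\<close>

definition Bn :: "nat \<Rightarrow> (nat \<Rightarrow> bool) set" where
  "Bn n = {x. \<forall>i. i \<notin> {1..n} \<longrightarrow> \<not> x i}"

definition Xspace :: "nat \<Rightarrow> ((nat \<Rightarrow> nat) \<times> (nat \<Rightarrow> bool)) set" where
  "Xspace n = {(s, x). (\<forall>t. s t \<in> {1..n}) \<and> x \<in> Bn n}"

definition Ff :: "((nat \<Rightarrow> bool) \<Rightarrow> (nat \<Rightarrow> bool)) \<Rightarrow> nat \<Rightarrow> (nat \<Rightarrow> bool) \<Rightarrow> (nat \<Rightarrow> bool)" where
  "Ff f i x = x(i := f x i)"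

definition Gf :: "((nat \<Rightarrow> bool) \<Rightarrow> (nat \<Rightarrow> bool)) \<Rightarrow>
    (nat \<Rightarrow> nat) \<times> (nat \<Rightarrow> bool) \<Rightarrow> (nat \<Rightarrow> nat) \<times> (nat \<Rightarrow> bool)" where
  "Gf f X = (\<lambda>t. fst X (Suc t), Ff f (fst X 0) (snd X))"

definition dX :: "nat \<Rightarrow> (nat \<Rightarrow> nat) \<times> (nat \<Rightarrow> bool) \<Rightarrow> (nat \<Rightarrow> nat) \<times> (nat \<Rightarrow> bool) \<Rightarrow> real" where
  "dX n X Y = (\<Sum>i = 1..n. (if snd X i = snd Y i then 0 else 1))
     + 9 / real n * (\<Sum>t. \<bar>real (fst X t) - real (fst Y t)\<bar> / 10 ^ (t + 1))"

definition topologically_transitive :: "nat \<Rightarrow> ((nat \<Rightarrow> bool) \<Rightarrow> (nat \<Rightarrow> bool)) \<Rightarrow> bool" where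
  "topologically_transitive n f \<longleftrightarrow>
     (\<forall>X\<in>Xspace n. \<forall>Y\<in>Xspace n. \<forall>rX>0. \<forall>rY>0.
        \<exists>X'\<in>Xspace n. dX n X X' < rX \<and> (\<exists>t. dX n Y ((Gf f ^^ t) X') < rY))"

definition periodic_point :: "nat \<Rightarrow> ((nat \<Rightarrow> bool) \<Rightarrow> (nat \<Rightarrow> bool)) \<Rightarrow>
    (nat \<Rightarrow> nat) \<times> (nat \<Rightarrow> bool) \<Rightarrow> bool" where
  "periodic_point n f X \<longleftrightarrow> X \<in> Xspace n \<and> (\<exists>p\<ge>1. (Gf f ^^ p) X = X)"

definition regular :: "nat \<Rightarrow> ((nat \<Rightarrow> bool) \<Rightarrow> (nat \<Rightarrow> bool)) \<Rightarrow> bool" where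
  "regular n f \<longleftrightarrow>
     (\<forall>X\<in>Xspace n. \<forall>r>0. \<exists>P. periodic_point n f P \<and> dX n X P < r)"

end

theory Submission
  imports Defs
begin

text \<open>Points at distance < 1 share their Boolean configuration, and agreement of the first
k strategy terms puts two points within 9/4 \<cdot> 2^-k. Given X = (s, x), transitivity yields an
orbit from a point with configuration x' (the one reached from X after k steps) to a point
with configuration x, in t steps with strategy terms u. Then the strategy repeating the word
s_0 \<dots> s_{k-1} u_0 \<dots> u_{t-1} forever, started at x, is periodic of period k + t and is
within 9/4 \<cdot> 2^-k of X.\<close>

lemma fst_funpow_Gf: "fst ((Gf f ^^ m) X) = (\<lambda>j. fst X (j + m))"
  by (induction m) (auto simp: Gf_def)

lemma snd_funpow_Gf_Suc:
  "snd ((Gf f ^^ Suc m) X) = Ff f (fst X m) (snd ((Gf f ^^ m) X))"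
  by (simp add: Gf_def fst_funpow_Gf)

lemma snd_funpow_Gf_cong:
  assumes "\<forall>j<m. fst X j = fst Y j" and "snd X = snd Y"
  shows "snd ((Gf f ^^ m) X) = snd ((Gf f ^^ m) Y)"
  using assms by (induction m) (simp_all only: snd_funpow_Gf_Suc, simp_all)

lemma funpow_Gf_in_Xspace:
  assumes "X \<in> Xspace n"
  shows "(Gf f ^^ m) X \<in> Xspace n"
proof -
  have "snd ((Gf f ^^ m) X) \<in> Bn n"
  proof (induction m)
    case 0
    then show ?case using assms by (auto simp: Xspace_def)
  next
    case (Suc m)
    have "fst X m \<in> {1..n}" using assms by (auto simp: Xspace_def)
    then show ?case using Suc unfolding snd_funpow_Gf_Suc by (auto simp: Bn_def Ff_def)
  qed
  moreover have "\<forall>t. fst ((Gf f ^^ m) X) t \<in> {1..n}"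
    using assms by (auto simp: fst_funpow_Gf Xspace_def)
  ultimately show ?thesis by (cases "(Gf f ^^ m) X") (simp add: Xspace_def)
qed

lemma strategy_term_le:
  assumes "X \<in> Xspace n" "Y \<in> Xspace n"
  shows "\<bar>real (fst X t) - real (fst Y t)\<bar> / 10 ^ (t + 1) \<le> real n * (1/10) ^ (t + 1)"
proof -
  have "fst X t \<in> {1..n}" "fst Y t \<in> {1..n}" using assms by (auto simp: Xspace_def)
  then have "\<bar>real (fst X t) - real (fst Y t)\<bar> \<le> real n" by auto
  then show ?thesis by (simp add: divide_right_mono power_one_over field_simps)
qed

lemma summable_geometric_shifted: "\<bar>q\<bar> < 1 \<Longrightarrow> summable (\<lambda>t. c * (q::real) ^ (t + 1))"
  using summable_ignore_initial_segment[OF summable_geometric[of q], of 1] by (intro summable_mult) simp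

lemma summable_strategy_terms:
  assumes "X \<in> Xspace n" "Y \<in> Xspace n"
  shows "summable (\<lambda>t. \<bar>real (fst X t) - real (fst Y t)\<bar> / 10 ^ (t + 1))"
  by (rule summable_comparison_test'[OF summable_geometric_shifted[of "1/10" "real n"]])
     (use strategy_term_le[OF assms] in auto)

lemma dX_lt_1_imp_snd_eq:
  assumes "X \<in> Xspace n" "Y \<in> Xspace n" "dX n X Y < 1"
  shows "snd X = snd Y"
proof (rule ccontr)
  assume "snd X \<noteq> snd Y"
  then obtain i where i: "snd X i \<noteq> snd Y i" by auto
  have "i \<in> {1..n}" using i assms(1,2) by (auto simp: Xspace_def Bn_def)
  then have "1 \<le> (\<Sum>i = 1..n. (if snd X i = snd Y i then 0 else 1::real))"
    using i by (intro member_le_sum[where i=i, THEN order_trans[rotated]]) auto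
  moreover have "0 \<le> 9 / real n * (\<Sum>t. \<bar>real (fst X t) - real (fst Y t)\<bar> / 10 ^ (t + 1))"
    by (intro mult_nonneg_nonneg suminf_nonneg summable_strategy_terms[OF assms(1,2)]) auto
  ultimately show False using assms(3) unfolding dX_def by linarith
qed

lemma dX_le_if_strategies_agree:
  assumes "X \<in> Xspace n" "Y \<in> Xspace n" "snd X = snd Y" "\<forall>j<k. fst X j = fst Y j"
  shows "dX n X Y \<le> 9/4 * (1/2) ^ k"
proof -
  define c where "c = real n * (1/2) ^ k"
  have term_le: "\<bar>real (fst X j) - real (fst Y j)\<bar> / 10 ^ (j + 1) \<le> c * (1/5) ^ (j + 1)" for j
  proof (cases "j < k")
    case True
    then show ?thesis using assms(4) by (simp add: c_def)
  next
    case False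
    have "(1/2::real) ^ (j + 1) \<le> (1/2) ^ k" using False by (intro power_decreasing) auto
    have "\<bar>real (fst X j) - real (fst Y j)\<bar> / 10 ^ (j + 1) \<le> real n * (1/10) ^ (j + 1)"
      by (rule strategy_term_le[OF assms(1,2)])
    also have "\<dots> = real n * (1/2) ^ (j + 1) * (1/5) ^ (j + 1)"
      by (simp add: power_mult_distrib[symmetric])
    also have "\<dots> \<le> c * (1/5) ^ (j + 1)"
      unfolding c_def using \<open>(1/2::real) ^ (j + 1) \<le> (1/2) ^ k\<close>
      by (intro mult_left_mono mult_right_mono) auto
    finally show ?thesis .
  qed
  have "(\<lambda>j. c * (1/5::real) ^ (j + 1)) sums (c * (1/5) * (1 / (1 - 1/5)))"
    using sums_mult[OF geometric_sums[of "1/5::real"], of "c * (1/5)"] by (simp add: mult.assoc)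
  then have sum_le: "(\<Sum>j. \<bar>real (fst X j) - real (fst Y j)\<bar> / 10 ^ (j + 1)) \<le> c / 4"
    using suminf_le[OF term_le summable_strategy_terms[OF assms(1,2)]] by (simp add: sums_iff)
  have "dX n X Y = 9 / real n * (\<Sum>j. \<bar>real (fst X j) - real (fst Y j)\<bar> / 10 ^ (j + 1))"
    using assms(3) by (simp add: dX_def)
  also have "\<dots> \<le> 9 / real n * (c / 4)"
    by (rule mult_left_mono[OF sum_le]) simp
  also have "\<dots> \<le> 9/4 * (1/2) ^ k"
    by (cases "n = 0") (simp_all add: c_def)
  finally show ?thesis .
qed

lemma periodic_point_from_return:
  assumes X: "X \<in> Xspace n" and X': "X' \<in> Xspace n" and "k \<ge> 1"
    and start: "snd X' = snd ((Gf f ^^ k) X)" and return: "snd ((Gf f ^^ t) X') = snd X"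
  obtains P where "periodic_point n f P" "snd P = snd X" "\<forall>j<k. fst P j = fst X j"
proof -
  define p where "p = t + k"
  define w where "w j = (if j mod p < k then fst X (j mod p) else fst X' (j mod p - k))" for j
  define P where "P = (w, snd X)"
  have "p \<ge> 1" "k \<le> p" using \<open>k \<ge> 1\<close> by (auto simp: p_def)
  have w_low: "\<forall>j<k. w j = fst X j" using \<open>k \<le> p\<close> by (simp add: w_def)
  have P_in: "P \<in> Xspace n" using X X' by (auto simp: P_def w_def Xspace_def)
  define Q where "Q = (Gf f ^^ k) P"
  have fst_Q: "fst Q = (\<lambda>j. w (j + k))" by (simp add: Q_def fst_funpow_Gf P_def)
  have "snd Q = snd X'"
    unfolding Q_def start by (rule snd_funpow_Gf_cong) (auto simp: P_def w_low)
  then have "snd ((Gf f ^^ t) Q) = snd ((Gf f ^^ t) X')"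
    by (intro snd_funpow_Gf_cong) (auto simp: fst_Q w_def p_def)
  moreover have "fst ((Gf f ^^ t) Q) = w"
    by (rule ext) (simp add: fst_funpow_Gf fst_Q w_def p_def add.assoc)
  ultimately have "(Gf f ^^ t) Q = P" using return by (simp add: P_def prod_eq_iff)
  then have "(Gf f ^^ p) P = P" by (simp add: p_def Q_def funpow_add)
  then have "periodic_point n f P"
    unfolding periodic_point_def using P_in \<open>p \<ge> 1\<close> by blast
  then show ?thesis using that w_low by (simp add: P_def)
qed

lemma transitive_return:
  assumes "topologically_transitive n f" "X \<in> Xspace n" "Y \<in> Xspace n"
  obtains X' t where "X' \<in> Xspace n" "snd X' = snd X" "snd ((Gf f ^^ t) X') = snd Y"
proof -
  obtain X' t where X': "X' \<in> Xspace n" "dX n X X' < 1" "dX n Y ((Gf f ^^ t) X') < 1"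
    using assms unfolding topologically_transitive_def by (meson zero_less_one)
  then show ?thesis
    using that dX_lt_1_imp_snd_eq[OF assms(2)] dX_lt_1_imp_snd_eq[OF assms(3)]
      funpow_Gf_in_Xspace by metis
qed

theorem proposition2:
  fixes n :: nat and f :: "(nat \<Rightarrow> bool) \<Rightarrow> (nat \<Rightarrow> bool)"
  assumes "n \<ge> 1"
    and "\<forall>x\<in>Bn n. f x \<in> Bn n"
    and "topologically_transitive n f"
  shows "regular n f"
  unfolding regular_def
proof (intro ballI allI impI)
  fix X and r :: real
  assume X: "X \<in> Xspace n" and "r > 0"
  obtain k0 where k0: "(1/2::real) ^ k0 < 4 * r / 9"
    using real_arch_pow_inv[of "4 * r / 9" "1/2::real"] \<open>r > 0\<close> by auto
  define k where "k = Suc k0"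
  have "(1/2::real) ^ k \<le> (1/2) ^ k0" unfolding k_def by (intro power_decreasing) auto
  with k0 have k_small: "9/4 * (1/2::real) ^ k < r" by linarith
  have "(fst X, snd ((Gf f ^^ k) X)) \<in> Xspace n"
    using X funpow_Gf_in_Xspace[OF X, where f=f and m=k] by (auto simp: Xspace_def)
  then obtain X' t where X': "X' \<in> Xspace n" "snd X' = snd ((Gf f ^^ k) X)"
      "snd ((Gf f ^^ t) X') = snd X"
    by (rule transitive_return[OF assms(3) _ X]) simp
  obtain P where P: "periodic_point n f P" "snd P = snd X" "\<forall>j<k. fst P j = fst X j"
    by (rule periodic_point_from_return[OF X X'(1) _ X'(2,3)]) (simp add: k_def)
  have "dX n X P \<le> 9/4 * (1/2) ^ k"
    using P by (intro dX_le_if_strategies_agree[OF X]) (auto simp: periodic_point_def)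
  with P(1) k_small show "\<exists>P. periodic_point n f P \<and> dX n X P < r" by fastforce
qed

end
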